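(* Let $\mathsf{CS}$ be a constant specification for $\mathsf{LPC}^+$ and let $\mathcal M=(W,W_N,R_{Fm},R_{Tm},V)$ be the canonical relational model for $\mathsf{LPC}^+_{\mathsf{CS}}$. Then for every formula $\phi$ and every $\Gamma\in W$: $\mathcal M,\Gamma\models\phi$ iff $\phi\in\Gamma$.
   Context: Language: countable sets $\mathsf{Const}$, $\mathsf{Var}$, $\mathsf{Prop}$; terms $t ::= c \mid x \mid t\cdot t \mid t+t \mid\ !t$; formulas $\phi ::= p \mid \neg\phi \mid \phi\wedge\phi \mid \phi\supset\phi \mid \phi>\phi \mid t{:}\phi$; $\mathsf{Tm},\mathsf{Fm}$ the sets of terms and formulas; $\bot:=\chi\wedge\neg\chi$ for a fixed $\chi$. Axiom schemes of $\mathsf{LPC}^+$: (A1) all instances of classical tautologies; (A2) $(\phi>(\psi\supset\chi))\supset((\phi>\psi)\supset(\phi>\chi))$; (A3) $\phi>\phi$; (A4) $(\phi>\psi)\supset(\phi\supset\psi)$; (A5) $(s{:}(\phi>\psi)\wedge t{:}\phi) > (s\cdot t){:}\psi$; (A6) $s{:}\phi > (s+t){:}\phi$; (A7) $t{:}\phi>(s+t){:}\phi$; (A8) $t{:}\phi>\phi$; (A9) $t{:}\phi > (!t){:}t{:}\phi$. A constant specification $\mathsf{CS}$ is a set of $c{:}\phi$ with $c\in\mathsf{Const}$, $\phi$ an instance of (A1)–(A9). $\mathsf{LPC}^+_{\mathsf{CS}}$: axioms (A1)–(A9) and $\mathsf{CS}$; rules (MP) and (RCN): from $\psi$ infer $\phi>\psi$.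 $T\vdash\phi$ iff $\vdash(\psi_1\wedge\cdots\wedge\psi_n)\supset\phi$ for some $\psi_i\in T$; $T$ consistent iff $T\nvdash\bot$; maximal consistent sets as usual. Relational models $(W,W_N,R_{Fm},R_{Tm},V)$: $W_N\subseteq W$ nonempty; $R_\phi\subseteq W_N\times W_N$ for each formula; $R_t\subseteq W\times W$ for each term; $V(w)\subseteq\mathsf{Prop}$ for $w\in W_N$, $V(w)\subseteq\mathsf{Fm}$ for $w\in W\setminus W_N$. Truth: at non-normal $w$, $w\models\phi$ iff $\phi\in V(w)$; at normal $w$: $p$ iff $p\in V(w)$, $\neg,\wedge,\supset$ classical, $\phi>\psi$ iff $R_\phi(w)\subseteq[\psi]$, $t{:}\phi$ iff $R_t(w)\subseteq[\phi]$, with $[\phi]=\{w\in W: w\models\phi\}$. The canonical relational model for $\mathsf{LPC}^+_{\mathsf{CS}}$: $W$ is the set of all subsets of $\mathsf{Fm}$; $W_N$ is the set of maximal $\mathsf{LPC}^+_{\mathsf{CS}}$-consistent sets; for $\Gamma,\Delta\in W_N$, $\Gamma R_\phi\Delta$ iff $\Gamma/\phi\subseteq\Delta$ where $\Gamma/\phi=\{\psi:\phi>\psi\in\Gamma\}$; for $\Gamma,\Delta\in W$, $\Gamma R_t\Delta$ iff $\Gamma/t\subseteq\Delta$ where $\Gamma/t=\{\psi: t{:}\psi\in\Gamma\}$; $V(\Gamma)=\Gamma$ for $\Gamma\in W\setminus W_N$ and $V(\Gamma)=\mathsf{Prop}\cap\Gamma$ for $\Gamma\in W_N$. *)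

theory Defs
  imports "HOL-Library.Countable"
begin

datatype ('c, 'v) tm =
    TConst 'c
  | TVar 'v
  | App "('c, 'v) tm" "('c, 'v) tm"
  | Sum "('c, 'v) tm" "('c, 'v) tm"
  | Bang "('c, 'v) tm"

datatype ('c, 'v, 'p) fm =
    Atom 'p
  | Neg "('c, 'v, 'p) fm"
  | Conj "('c, 'v, 'p) fm" "('c, 'v, 'p) fm"
  | Imp "('c, 'v, 'p) fm" "('c, 'v, 'p) fm"
  | Cond "('c, 'v, 'p) fm" "('c, 'v, 'p) fm"
  | Just "('c, 'v) tm" "('c, 'v, 'p) fm"

definition chi :: "('c, 'v, 'p) fm" where "chi = Atom undefined"
definition Falsum :: "('c, 'v, 'p) fm" where "Falsum = Conj chi (Neg chi)"

fun peval :: "(('c, 'v, 'p) fm \<Rightarrow> bool) \<Rightarrow> ('c, 'v, 'p) fm \<Rightarrow> bool" where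
  "peval v (Atom p) = v (Atom p)"
| "peval v (Neg a) = (\<not> peval v a)"
| "peval v (Conj a b) = (peval v a \<and> peval v b)"
| "peval v (Imp a b) = (peval v a \<longrightarrow> peval v b)"
| "peval v (Cond a b) = v (Cond a b)"
| "peval v (Just t a) = v (Just t a)"

definition tautology :: "('c, 'v, 'p) fm \<Rightarrow> bool" where
  "tautology \<phi> \<longleftrightarrow> (\<forall>v. peval v \<phi>)"

inductive axiom :: "('c, 'v, 'p) fm \<Rightarrow> bool" where
  A1: "tautology \<phi> \<Longrightarrow> axiom \<phi>"
| A2: "axiom (Imp (Cond \<phi> (Imp \<psi> \<chi>)) (Imp (Cond \<phi> \<psi>) (Cond \<phi> \<chi>)))"
| A3: "axiom (Cond \<phi> \<phi>)"
| A4: "axiom (Imp (Cond \<phi> \<psi>) (Imp \<phi> \<psi>))"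
| A5: "axiom (Cond (Conj (Just s (Cond \<phi> \<psi>)) (Just t \<phi>)) (Just (App s t) \<psi>))"
| A6: "axiom (Cond (Just s \<phi>) (Just (Sum s t) \<phi>))"
| A7: "axiom (Cond (Just t \<phi>) (Just (Sum s t) \<phi>))"
| A8: "axiom (Cond (Just t \<phi>) \<phi>)"
| A9: "axiom (Cond (Just t \<phi>) (Just (Bang t) (Just t \<phi>)))"

definition const_spec :: "('c, 'v, 'p) fm set \<Rightarrow> bool" where
  "const_spec CS \<longleftrightarrow> (\<forall>\<theta>\<in>CS. \<exists>c \<phi>. \<theta> = Just (TConst c) \<phi> \<and> axiom \<phi>)"

inductive derivable :: "('c, 'v, 'p) fm set \<Rightarrow> ('c, 'v, 'p) fm \<Rightarrow> bool" for CS where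
  Ax: "axiom \<phi> \<Longrightarrow> derivable CS \<phi>"
| CSax: "\<phi> \<in> CS \<Longrightarrow> derivable CS \<phi>"
| MP: "derivable CS (Imp \<phi> \<psi>) \<Longrightarrow> derivable CS \<phi> \<Longrightarrow> derivable CS \<psi>"
| RCN: "derivable CS \<psi> \<Longrightarrow> derivable CS (Cond \<phi> \<psi>)"

fun conjs :: "('c, 'v, 'p) fm list \<Rightarrow> ('c, 'v, 'p) fm" where
  "conjs [] = Neg Falsum"
| "conjs [\<psi>] = \<psi>"
| "conjs (\<psi> # \<psi>s) = Conj \<psi> (conjs \<psi>s)"

definition derives :: "('c, 'v, 'p) fm set \<Rightarrow> ('c, 'v, 'p) fm set \<Rightarrow> ('c, 'v, 'p) fm \<Rightarrow> bool" where
  "derives CS T \<phi> \<longleftrightarrow>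
     (\<exists>\<psi>s. \<psi>s \<noteq> [] \<and> set \<psi>s \<subseteq> T \<and> derivable CS (Imp (conjs \<psi>s) \<phi>))"

definition consistent :: "('c, 'v, 'p) fm set \<Rightarrow> ('c, 'v, 'p) fm set \<Rightarrow> bool" where
  "consistent CS T \<longleftrightarrow> \<not> derives CS T Falsum"

definition max_consistent :: "('c, 'v, 'p) fm set \<Rightarrow> ('c, 'v, 'p) fm set \<Rightarrow> bool" where
  "max_consistent CS \<Gamma> \<longleftrightarrow> consistent CS \<Gamma> \<and> (\<forall>\<Delta>. \<Gamma> \<subset> \<Delta> \<longrightarrow> \<not> consistent CS \<Delta>)"

text \<open>V w is a set of formulas; at normal worlds it is meant to consist of atoms only
(Prop is identified with the atomic formulas Atom p).\<close>
record ('w, 'c, 'v, 'p) rmodel =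
  W  :: "'w set"
  WN :: "'w set"
  RF :: "('c, 'v, 'p) fm \<Rightarrow> ('w \<times> 'w) set"
  RT :: "('c, 'v) tm \<Rightarrow> ('w \<times> 'w) set"
  Val :: "'w \<Rightarrow> ('c, 'v, 'p) fm set"

fun sat :: "('w, 'c, 'v, 'p) rmodel \<Rightarrow> 'w \<Rightarrow> ('c, 'v, 'p) fm \<Rightarrow> bool" where
  "sat M w (Atom p) = (Atom p \<in> Val M w)"
| "sat M w (Neg a) = (if w \<in> WN M then \<not> sat M w a else Neg a \<in> Val M w)"
| "sat M w (Conj a b) = (if w \<in> WN M then sat M w a \<and> sat M w b else Conj a b \<in> Val M w)"
| "sat M w (Imp a b) = (if w \<in> WN M then (sat M w a \<longrightarrow> sat M w b) else Imp a b \<in> Val M w)"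
| "sat M w (Cond a b) = (if w \<in> WN M then RF M a `` {w} \<subseteq> {u \<in> W M. sat M u b}
                         else Cond a b \<in> Val M w)"
| "sat M w (Just t a) = (if w \<in> WN M then RT M t `` {w} \<subseteq> {u \<in> W M. sat M u a}
                         else Just t a \<in> Val M w)"

definition cond_quot :: "('c, 'v, 'p) fm set \<Rightarrow> ('c, 'v, 'p) fm \<Rightarrow> ('c, 'v, 'p) fm set" where
  "cond_quot \<Gamma> \<phi> = {\<psi>. Cond \<phi> \<psi> \<in> \<Gamma>}"

definition just_quot :: "('c, 'v, 'p) fm set \<Rightarrow> ('c, 'v) tm \<Rightarrow> ('c, 'v, 'p) fm set" where
  "just_quot \<Gamma> t = {\<psi>. Just t \<psi> \<in> \<Gamma>}"

definition canonical :: "('c, 'v, 'p) fm set \<Rightarrow> (('c, 'v, 'p) fm set, 'c, 'v, 'p) rmodel" where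
  "canonical CS =
     \<lparr> W = UNIV,
       WN = {\<Gamma>. max_consistent CS \<Gamma>},
       RF = (\<lambda>\<phi>. {(\<Gamma>, \<Delta>). max_consistent CS \<Gamma> \<and> max_consistent CS \<Delta> \<and> cond_quot \<Gamma> \<phi> \<subseteq> \<Delta>}),
       RT = (\<lambda>t. {(\<Gamma>, \<Delta>). just_quot \<Gamma> t \<subseteq> \<Delta>}),
       Val = (\<lambda>\<Gamma>. if max_consistent CS \<Gamma> then {\<phi> \<in> \<Gamma>. \<exists>p. \<phi> = Atom p} else \<Gamma>) \<rparr>"

end

theory Submission
  imports Defs
begin

text \<open>At non-normal worlds truth is membership by
definition. At maximal consistent sets the Boolean cases are the usual closure properties,
and \<open>t:\<psi>\<close> is immediate because \<open>R\<^sub>t\<close> ranges over all sets of formulas, \<open>\<Gamma>/t\<close> itself among them.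
For \<open>\<phi> > \<psi>\<close> with \<open>\<phi> > \<psi> \<notin> \<Gamma>\<close>, the set \<open>\<Gamma>/\<phi> \<union> {\<not>\<psi>}\<close> is consistent, because (A2) together
with (RCN) lets \<open>\<phi> > _\<close> distribute over a derivation from \<open>\<Gamma>/\<phi>\<close>; its Lindenbaum extension is
an \<open>R\<^sub>\<phi>\<close>-successor of \<open>\<Gamma>\<close> falsifying \<open>\<psi>\<close>.\<close>

fun eval_collapsed :: "('p \<Rightarrow> bool) \<Rightarrow> ('c, 'v, 'p) fm \<Rightarrow> bool" where
  "eval_collapsed e (Atom p) = e p"
| "eval_collapsed e (Neg a) = (\<not> eval_collapsed e a)"
| "eval_collapsed e (Conj a b) = (eval_collapsed e a \<and> eval_collapsed e b)"
| "eval_collapsed e (Imp a b) = (eval_collapsed e a \<longrightarrow> eval_collapsed e b)"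
| "eval_collapsed e (Cond a b) = (eval_collapsed e a \<longrightarrow> eval_collapsed e b)"
| "eval_collapsed e (Just t a) = eval_collapsed e a"

lemma peval_eval_collapsed: "peval (eval_collapsed e) \<phi> = eval_collapsed e \<phi>"
  by (induction \<phi>) auto

lemma axiom_eval_collapsed: "axiom \<phi> \<Longrightarrow> eval_collapsed e \<phi>"
proof (induction rule: axiom.induct)
  case (A1 \<phi>)
  then show ?case
    unfolding tautology_def by (metis peval_eval_collapsed)
qed auto

lemma derivable_eval_collapsed:
  "derivable CS \<phi> \<Longrightarrow> const_spec CS \<Longrightarrow> eval_collapsed e \<phi>"
  by (induction rule: derivable.induct) (auto simp: axiom_eval_collapsed const_spec_def)

lemma not_derivable_Falsum: "const_spec CS \<Longrightarrow> \<not> derivable CS Falsum"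
  using derivable_eval_collapsed[of CS Falsum "\<lambda>_. True"] by (auto simp: Falsum_def)

lemma peval_conjs: "peval v (conjs xs) \<longleftrightarrow> (\<forall>x\<in>set xs. peval v x)"
  by (induction xs rule: conjs.induct) (auto simp: Falsum_def)

lemma derivable_tautology: "tautology \<phi> \<Longrightarrow> derivable CS \<phi>"
  by (simp add: derivable.Ax axiom.A1)

lemma derivable_tautology_mp:
  "tautology (Imp a b) \<Longrightarrow> derivable CS a \<Longrightarrow> derivable CS b"
  by (meson derivable.MP derivable_tautology)

lemma derivable_tautology_mp2:
  "tautology (Imp a (Imp b c)) \<Longrightarrow> derivable CS a \<Longrightarrow> derivable CS b \<Longrightarrow> derivable CS c"
  by (meson derivable.MP derivable_tautology)

lemma max_consistent_insert_inconsistent: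
  assumes "max_consistent CS \<Gamma>" "\<phi> \<notin> \<Gamma>"
  obtains \<chi>s where "set \<chi>s \<subseteq> insert \<phi> \<Gamma>" "derivable CS (Imp (conjs \<chi>s) Falsum)"
proof -
  have "\<Gamma> \<subset> insert \<phi> \<Gamma>" using assms(2) by auto
  then have "\<not> consistent CS (insert \<phi> \<Gamma>)" using assms(1) by (auto simp: max_consistent_def)
  then show ?thesis using that by (auto simp: consistent_def derives_def)
qed

lemma max_consistent_derivable_closed:
  assumes cs: "const_spec CS" and m: "max_consistent CS \<Gamma>"
    and sub: "set \<psi>s \<subseteq> \<Gamma>" and d: "derivable CS (Imp (conjs \<psi>s) \<phi>)"
  shows "\<phi> \<in> \<Gamma>"
proof (rule ccontr)
  assume "\<phi> \<notin> \<Gamma>"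
  then obtain \<chi>s where \<chi>s: "set \<chi>s \<subseteq> insert \<phi> \<Gamma>" "derivable CS (Imp (conjs \<chi>s) Falsum)"
    using max_consistent_insert_inconsistent[OF m] by blast
  define L where "L = \<psi>s @ filter (\<lambda>x. x \<noteq> \<phi>) \<chi>s"
  have "tautology (Imp (Imp (conjs \<psi>s) \<phi>) (Imp (Imp (conjs \<chi>s) Falsum) (Imp (conjs L) Falsum)))"
    using \<chi>s(1) unfolding tautology_def L_def by (auto simp: peval_conjs Falsum_def)
  then have L_Falsum: "derivable CS (Imp (conjs L) Falsum)"
    using derivable_tautology_mp2 d \<chi>s(2) by blast
  show False
  proof (cases "L = []")
    case True
    \<comment> \<open>\<open>derives\<close> only admits nonempty premise lists, so this case needs the consistency of the logic.\<close>
    have "derivable CS (conjs [])"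
      by (rule derivable_tautology) (simp add: tautology_def Falsum_def)
    then have "derivable CS Falsum" using L_Falsum True derivable.MP by blast
    then show False using not_derivable_Falsum[OF cs] by blast
  next
    case False
    moreover have "set L \<subseteq> \<Gamma>" using sub \<chi>s(1) unfolding L_def by auto
    ultimately have "derives CS \<Gamma> Falsum" using L_Falsum by (auto simp: derives_def)
    then show False using m by (auto simp: max_consistent_def consistent_def)
  qed
qed

lemma max_consistent_tautology_closed:
  "const_spec CS \<Longrightarrow> max_consistent CS \<Gamma> \<Longrightarrow> set \<psi>s \<subseteq> \<Gamma> \<Longrightarrow>
    tautology (Imp (conjs \<psi>s) \<phi>) \<Longrightarrow> \<phi> \<in> \<Gamma>"
  by (blast intro: max_consistent_derivable_closed derivable_tautology)

lemma Falsum_notin_max_consistent: "max_consistent CS \<Gamma> \<Longrightarrow> Falsum \<notin> \<Gamma>"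
proof
  assume m: "max_consistent CS \<Gamma>" and "Falsum \<in> \<Gamma>"
  moreover have "derivable CS (Imp (conjs [Falsum]) Falsum)"
    by (rule derivable_tautology) (simp add: tautology_def)
  ultimately have "derives CS \<Gamma> Falsum" unfolding derives_def by (intro exI[of _ "[Falsum]"]) auto
  then show False using m by (auto simp: max_consistent_def consistent_def)
qed

lemma Neg_in_max_consistent_if_notin:
  assumes cs: "const_spec CS" and m: "max_consistent CS \<Gamma>" and "a \<notin> \<Gamma>"
  shows "Neg a \<in> \<Gamma>"
proof -
  obtain \<chi>s where \<chi>s: "set \<chi>s \<subseteq> insert a \<Gamma>" "derivable CS (Imp (conjs \<chi>s) Falsum)"
    using max_consistent_insert_inconsistent[OF m \<open>a \<notin> \<Gamma>\<close>] by blast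
  define L where "L = filter (\<lambda>x. x \<noteq> a) \<chi>s"
  have "tautology (Imp (Imp (conjs \<chi>s) Falsum) (Imp (conjs L) (Neg a)))"
    using \<chi>s(1) unfolding tautology_def L_def by (auto simp: peval_conjs Falsum_def)
  then have "derivable CS (Imp (conjs L) (Neg a))" using derivable_tautology_mp \<chi>s(2) by blast
  moreover have "set L \<subseteq> \<Gamma>" using \<chi>s(1) unfolding L_def by auto
  ultimately show ?thesis using max_consistent_derivable_closed[OF cs m] by blast
qed

lemma max_consistent_Neg:
  assumes cs: "const_spec CS" and m: "max_consistent CS \<Gamma>"
  shows "Neg a \<in> \<Gamma> \<longleftrightarrow> a \<notin> \<Gamma>"
proof
  assume "Neg a \<in> \<Gamma>"
  show "a \<notin> \<Gamma>"
  proof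
    assume "a \<in> \<Gamma>"
    have "Falsum \<in> \<Gamma>"
      by (rule max_consistent_tautology_closed[OF cs m, of "[a, Neg a]"])
        (use \<open>a \<in> \<Gamma>\<close> \<open>Neg a \<in> \<Gamma>\<close> in \<open>auto simp: tautology_def Falsum_def\<close>)
    then show False using Falsum_notin_max_consistent[OF m] by blast
  qed
qed (rule Neg_in_max_consistent_if_notin[OF cs m])

lemma max_consistent_Conj:
  assumes cs: "const_spec CS" and m: "max_consistent CS \<Gamma>"
  shows "Conj a b \<in> \<Gamma> \<longleftrightarrow> a \<in> \<Gamma> \<and> b \<in> \<Gamma>"
proof (intro iffI conjI)
  assume ab: "Conj a b \<in> \<Gamma>"
  show "a \<in> \<Gamma>"
    by (rule max_consistent_tautology_closed[OF cs m, of "[Conj a b]"])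
      (use ab in \<open>auto simp: tautology_def\<close>)
  show "b \<in> \<Gamma>"
    by (rule max_consistent_tautology_closed[OF cs m, of "[Conj a b]"])
      (use ab in \<open>auto simp: tautology_def\<close>)
next
  assume "a \<in> \<Gamma> \<and> b \<in> \<Gamma>"
  then show "Conj a b \<in> \<Gamma>"
    by (intro max_consistent_tautology_closed[OF cs m, of "[a, b]"]) (auto simp: tautology_def)
qed

lemma max_consistent_Imp:
  assumes cs: "const_spec CS" and m: "max_consistent CS \<Gamma>"
  shows "Imp a b \<in> \<Gamma> \<longleftrightarrow> (a \<in> \<Gamma> \<longrightarrow> b \<in> \<Gamma>)"
proof (intro iffI impI)
  assume "Imp a b \<in> \<Gamma>" "a \<in> \<Gamma>"
  then show "b \<in> \<Gamma>"
    by (intro max_consistent_tautology_closed[OF cs m, of "[a, Imp a b]"])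
      (auto simp: tautology_def)
next
  assume "a \<in> \<Gamma> \<longrightarrow> b \<in> \<Gamma>"
  then consider "b \<in> \<Gamma>" | "Neg a \<in> \<Gamma>"
    using Neg_in_max_consistent_if_notin[OF cs m] by blast
  then show "Imp a b \<in> \<Gamma>"
  proof cases
    case 1
    then show ?thesis
      by (intro max_consistent_tautology_closed[OF cs m, of "[b]"]) (auto simp: tautology_def)
  next
    case 2
    then show ?thesis
      by (intro max_consistent_tautology_closed[OF cs m, of "[Neg a]"])
        (auto simp: tautology_def)
  qed
qed

text \<open>By Zorn's lemma.\<close>
lemma lindenbaum:
  assumes "consistent CS T"
  obtains \<Delta> where "max_consistent CS \<Delta>" "T \<subseteq> \<Delta>"
proof -
  let ?A = "{S. T \<subseteq> S \<and> consistent CS S}"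
  have "\<forall>C\<in>chains ?A. \<exists>U\<in>?A. \<forall>X\<in>C. X \<subseteq> U"
  proof (intro ballI)
    fix C assume C: "C \<in> chains ?A"
    show "\<exists>U\<in>?A. \<forall>X\<in>C. X \<subseteq> U"
    proof (cases "C = {}")
      case True
      then show ?thesis using assms by auto
    next
      case False
      have "consistent CS (\<Union>C)"
        unfolding consistent_def derives_def
      proof
        assume "\<exists>\<psi>s. \<psi>s \<noteq> [] \<and> set \<psi>s \<subseteq> \<Union>C \<and> derivable CS (Imp (conjs \<psi>s) Falsum)"
        then obtain \<psi>s where \<psi>s: "\<psi>s \<noteq> []" "set \<psi>s \<subseteq> \<Union>C" "derivable CS (Imp (conjs \<psi>s) Falsum)"
          by blast
        have "subset.chain UNIV C" using C by (simp add: chains_def chain_subset_alt_def)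
        then obtain B where "B \<in> C" "set \<psi>s \<subseteq> B"
          using finite_subset_Union_chain[OF _ \<psi>s(2) False] by blast
        then have "derives CS B Falsum" using \<psi>s by (auto simp: derives_def)
        then show False using \<open>B \<in> C\<close> C by (auto simp: chains_def consistent_def)
      qed
      moreover have "T \<subseteq> \<Union>C" using False C by (auto simp: chains_def)
      ultimately show ?thesis by blast
    qed
  qed
  then obtain M where M: "M \<in> ?A" "\<forall>X\<in>?A. M \<subseteq> X \<longrightarrow> X = M"
    using Zorn_Lemma2[of ?A] by blast
  have "max_consistent CS M"
    unfolding max_consistent_def using M by auto
  then show thesis using M that by blast
qed

lemma derivable_Cond_conjs:
  "derivable CS (Imp (conjs \<psi>s) b) \<Longrightarrow> derivable CS (Imp (conjs (map (Cond a) \<psi>s)) (Cond a b))"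
proof (induction \<psi>s arbitrary: b)
  case Nil
  have "derivable CS (conjs [])"
    by (rule derivable_tautology) (simp add: tautology_def Falsum_def)
  then have "derivable CS (Cond a b)" by (intro derivable.RCN derivable.MP[OF Nil])
  then show ?case
    by (rule derivable_tautology_mp[rotated]) (simp add: tautology_def Falsum_def)
next
  case (Cons x xs)
  have "tautology (Imp (Imp (conjs (x # xs)) b) (Imp (conjs xs) (Imp x b)))"
    by (simp add: tautology_def peval_conjs)
  then have IH: "derivable CS (Imp (conjs (map (Cond a) xs)) (Cond a (Imp x b)))"
    by (intro Cons.IH derivable_tautology_mp[OF _ Cons.prems])
  have A2: "derivable CS (Imp (Cond a (Imp x b)) (Imp (Cond a x) (Cond a b)))"
    by (rule derivable.Ax, rule axiom.A2)
  have "tautology (Imp (Imp (conjs (map (Cond a) xs)) (Cond a (Imp x b)))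
     (Imp (Imp (Cond a (Imp x b)) (Imp (Cond a x) (Cond a b)))
       (Imp (conjs (map (Cond a) (x # xs))) (Cond a b))))"
    by (simp add: tautology_def peval_conjs)
  then show ?case using IH A2 by (rule derivable_tautology_mp2)
qed

lemma consistent_cond_quot_Neg:
  assumes cs: "const_spec CS" and m: "max_consistent CS \<Gamma>" and "Cond a b \<notin> \<Gamma>"
  shows "consistent CS (insert (Neg b) (cond_quot \<Gamma> a))"
  unfolding consistent_def derives_def
proof
  assume "\<exists>\<chi>s. \<chi>s \<noteq> [] \<and> set \<chi>s \<subseteq> insert (Neg b) (cond_quot \<Gamma> a) \<and>
    derivable CS (Imp (conjs \<chi>s) Falsum)"
  then obtain \<chi>s where
    \<chi>s: "set \<chi>s \<subseteq> insert (Neg b) (cond_quot \<Gamma> a)" "derivable CS (Imp (conjs \<chi>s) Falsum)"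
    by blast
  define L where "L = filter (\<lambda>x. x \<noteq> Neg b) \<chi>s"
  have "tautology (Imp (Imp (conjs \<chi>s) Falsum) (Imp (conjs L) b))"
    using \<chi>s(1) unfolding tautology_def L_def by (auto simp: peval_conjs Falsum_def)
  then have "derivable CS (Imp (conjs (map (Cond a) L)) (Cond a b))"
    using derivable_Cond_conjs derivable_tautology_mp \<chi>s(2) by blast
  moreover have "set (map (Cond a) L) \<subseteq> \<Gamma>"
    using \<chi>s(1) by (auto simp: L_def cond_quot_def)
  ultimately have "Cond a b \<in> \<Gamma>" using max_consistent_derivable_closed[OF cs m] by blast
  then show False using \<open>Cond a b \<notin> \<Gamma>\<close> by blast
qed

lemma max_consistent_Cond:
  assumes cs: "const_spec CS" and m: "max_consistent CS \<Gamma>"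
  shows "Cond a b \<in> \<Gamma> \<longleftrightarrow> (\<forall>\<Delta>. max_consistent CS \<Delta> \<and> cond_quot \<Gamma> a \<subseteq> \<Delta> \<longrightarrow> b \<in> \<Delta>)"
proof
  assume succ: "\<forall>\<Delta>. max_consistent CS \<Delta> \<and> cond_quot \<Gamma> a \<subseteq> \<Delta> \<longrightarrow> b \<in> \<Delta>"
  show "Cond a b \<in> \<Gamma>"
  proof (rule ccontr)
    assume "Cond a b \<notin> \<Gamma>"
    then obtain \<Delta> where \<Delta>: "max_consistent CS \<Delta>" "insert (Neg b) (cond_quot \<Gamma> a) \<subseteq> \<Delta>"
      using lindenbaum consistent_cond_quot_Neg[OF cs m] by metis
    then have "b \<in> \<Delta>" "Neg b \<in> \<Delta>" using succ by auto
    then show False using max_consistent_Neg[OF cs \<Delta>(1)] by blast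
  qed
qed (auto simp: cond_quot_def)

theorem mainTheorem8:
  fixes CS :: "('c::countable, 'v::countable, 'p::countable) fm set"
    and \<phi> :: "('c, 'v, 'p) fm"
    and \<Gamma> :: "('c, 'v, 'p) fm set"
  assumes "const_spec CS"
    and "\<Gamma> \<in> W (canonical CS)"
  shows "sat (canonical CS) \<Gamma> \<phi> \<longleftrightarrow> \<phi> \<in> \<Gamma>"
proof (induction \<phi> arbitrary: \<Gamma>)
  case (Cond a b)
  show ?case
  proof (cases "max_consistent CS \<Gamma>")
    case True
    then have "sat (canonical CS) \<Gamma> (Cond a b) \<longleftrightarrow>
        (\<forall>\<Delta>. max_consistent CS \<Delta> \<and> cond_quot \<Gamma> a \<subseteq> \<Delta> \<longrightarrow> b \<in> \<Delta>)"
      using Cond.IH by (auto simp: canonical_def)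
    then show ?thesis using max_consistent_Cond[OF assms(1) True] by simp
  qed (simp add: canonical_def)
next
  case (Just t a)
  show ?case
  proof (cases "max_consistent CS \<Gamma>")
    case True
    then have "sat (canonical CS) \<Gamma> (Just t a) \<longleftrightarrow> (\<forall>\<Delta>. just_quot \<Gamma> t \<subseteq> \<Delta> \<longrightarrow> a \<in> \<Delta>)"
      using Just.IH by (auto simp: canonical_def)
    also have "\<dots> \<longleftrightarrow> Just t a \<in> \<Gamma>"
      by (auto simp: just_quot_def)
    finally show ?thesis .
  qed (simp add: canonical_def)
qed (simp_all add: canonical_def max_consistent_Neg[OF assms(1)]
      max_consistent_Conj[OF assms(1)] max_consistent_Imp[OF assms(1)])

end
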